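(* Suppose the conditional gradient algorithm chooses $\theta_k$ by the exact line search \[ \theta_k\in\arg\min_{\theta\in[0,1]}\{(1-\theta)\mathrm{gap}(x_k,g_k)+\mathcal{D}(x_k,s_k,\theta)\}, \] and suppose $q>1$, $r\in[0,1]$ are such that $(\mathcal D,\mathrm{gap})$ satisfies the $(q,r)$-growth property with some finite constant $M>0$. Then for $k=0,1,\dots$ \[ \mathrm{gap}_{k+1}\le \mathrm{gap}_k\Big(1-\tfrac{q-1}{q}\min\Big\{1,\Big(\tfrac{\mathrm{gap}_k^{1-r}}{M}\Big)^{\frac1{q-1}}\Big\}\Big). \] If $r=1$ then $\mathrm{gap}_k\le \mathrm{gap}_0\big(1-\frac{q-1}{q}\min\{1,M^{-1/(q-1)}\}\big)^k$ for all $k$. If $r\in[0,1)$ then $\mathrm{gap}_k\le\mathrm{gap}_0\big(1-\frac{q-1}{q}\big)^k$ for $k=0,1,\dots,k_0$, where $k_0$ is the smallest $k$ with $\mathrm{gap}_k^{1-r}\le M$, and for all $k\ge k_0$ \[ \mathrm{gap}_k\le\Big(\mathrm{gap}_{k_0}^{\frac{r-1}{q-1}}+\frac{1-r}{q}\cdot\frac{1}{M^{\frac1{q-1}}}\,(k-k_0)\Big)^{\frac{q-1}{r-1}}. \]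
   Context: Let $f,\Psi:\mathbb{R}^n\to\mathbb{R}\cup\{\infty\}$ be closed proper convex functions such that (A1) $f$ is differentiable on $\mathrm{dom}(\Psi)$, and (A2) for every $x\in\mathrm{dom}(f)$ the set $\arg\min_s\{\langle\nabla f(x),s\rangle+\Psi(s)\}$ is nonempty. $f^*,\Psi^*$ denote convex conjugates; $\arg\min_y\{\langle g,y\rangle+\Psi(y)\}=\partial\Psi^*(-g)$. $D_f(y,x)=f(y)-f(x)-\langle\nabla f(x),y-x\rangle$. Duality gap: $\mathrm{gap}(x,u)=f(x)+\Psi(x)+f^*(u)+\Psi^*(-u)$ for $x\in\mathrm{dom}(\Psi)$, $u\in\mathrm{dom}(f^* )$. For $x,s\in\mathrm{dom}(\Psi)$, $\theta\in[0,1]$: $\mathcal{D}(x,s,\theta)=D_f(x+\theta(s-x),x)+\Psi(x+\theta(s-x))-(1-\theta)\Psi(x)-\theta\Psi(s)$. Conditional gradient algorithm: given $x_0\in\mathrm{dom}(\Psi)$, for $k=0,1,2,\dots$ let $g_k=\nabla f(x_k)$, pick $s_k\in\arg\min_y\{\langle g_k,y\rangle+\Psi(y)\}$ and $\theta_k\in[0,1]$, and set $x_{k+1}=(1-\theta_k)x_k+\theta_k s_k$. The best duality gaps are $\mathrm{gap}_k=\min_{i=0,\dots,k}\mathrm{gap}(x_k,g_i)$. $(q,r)$-growth property ($q>1$, $r\in[0,1]$): there is a finite $M>0$ such that for all $x\in\mathrm{dom}(\Psi)$, $g=\nabla f(x)$ and $s\in\partial\Psi^*(-g)$, $\mathcal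 D(x,s,\theta)\le \frac{M\theta^q}{q}\mathrm{gap}(x,g)^r$ for all $\theta\in[0,1]$. *)

theory Defs
  imports "HOL-Analysis.Analysis"
begin

text \<open>Extended-real-valued functions on a Euclidean space ('a), representing
  functions R^n -> R \<union> {+\<infinity>}.\<close>

definition edom :: "('a \<Rightarrow> ereal) \<Rightarrow> 'a set" where
  "edom f = {x. f x \<noteq> \<infinity>}"

definition proper_fn :: "('a \<Rightarrow> ereal) \<Rightarrow> bool" where
  "proper_fn f \<longleftrightarrow> (\<forall>x. f x \<noteq> -\<infinity>) \<and> (\<exists>x. f x \<noteq> \<infinity>)"

definition convex_fn :: "('a::real_vector \<Rightarrow> ereal) \<Rightarrow> bool" where
  "convex_fn f \<longleftrightarrow> (\<forall>x y t. 0 \<le> t \<and> t \<le> 1 \<longrightarrow>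
     f ((1 - t) *\<^sub>R x + t *\<^sub>R y) \<le> ereal (1 - t) * f x + ereal t * f y)"

text \<open>closed = lower semicontinuous = closed epigraph\<close>
definition closed_fn :: "('a::topological_space \<Rightarrow> ereal) \<Rightarrow> bool" where
  "closed_fn f \<longleftrightarrow> closed {(x, t::real). f x \<le> ereal t}"

definition cpc_fn :: "('a::real_normed_vector \<Rightarrow> ereal) \<Rightarrow> bool" where
  "cpc_fn f \<longleftrightarrow> closed_fn f \<and> proper_fn f \<and> convex_fn f"

definition conj_fn :: "('a::real_inner \<Rightarrow> ereal) \<Rightarrow> 'a \<Rightarrow> ereal" where
  "conj_fn f u = (SUP x. ereal (u \<bullet> x) - f x)"

definition has_grad :: "('a::real_inner \<Rightarrow> ereal) \<Rightarrow> 'a \<Rightarrow> 'a \<Rightarrow> bool" where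
  "has_grad f x g \<longleftrightarrow> (\<forall>\<^sub>F y in nhds x. f y \<noteq> \<infinity>) \<and>
     ((\<lambda>y. real_of_ereal (f y)) has_derivative (\<lambda>h. g \<bullet> h)) (at x)"

definition grad :: "('a::real_inner \<Rightarrow> ereal) \<Rightarrow> 'a \<Rightarrow> 'a" where
  "grad f x = (SOME g. has_grad f x g)"

definition is_argmin_lin :: "('a::real_inner \<Rightarrow> ereal) \<Rightarrow> 'a \<Rightarrow> 'a \<Rightarrow> bool" where
  "is_argmin_lin Psi g s \<longleftrightarrow> (\<forall>y. ereal (g \<bullet> s) + Psi s \<le> ereal (g \<bullet> y) + Psi y)"

definition bregman :: "('a::real_inner \<Rightarrow> ereal) \<Rightarrow> 'a \<Rightarrow> 'a \<Rightarrow> ereal" where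
  "bregman f y x = f y - f x - ereal (grad f x \<bullet> (y - x))"

definition dgap :: "('a::real_inner \<Rightarrow> ereal) \<Rightarrow> ('a \<Rightarrow> ereal) \<Rightarrow> 'a \<Rightarrow> 'a \<Rightarrow> ereal" where
  "dgap f Psi x u = f x + Psi x + conj_fn f u + conj_fn Psi (- u)"

definition Dcal :: "('a::real_inner \<Rightarrow> ereal) \<Rightarrow> ('a \<Rightarrow> ereal) \<Rightarrow> 'a \<Rightarrow> 'a \<Rightarrow> real \<Rightarrow> ereal" where
  "Dcal f Psi x s \<theta> = bregman f (x + \<theta> *\<^sub>R (s - x)) x + Psi (x + \<theta> *\<^sub>R (s - x))
      - ereal (1 - \<theta>) * Psi x - ereal \<theta> * Psi s"

text \<open>power with the convention 0^0 = 1 (used for nonnegative bases)\<close>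
definition pw :: "real \<Rightarrow> real \<Rightarrow> real" where
  "pw a p = (if p = 0 then 1 else a powr p)"

definition growth :: "('a::real_inner \<Rightarrow> ereal) \<Rightarrow> ('a \<Rightarrow> ereal) \<Rightarrow> real \<Rightarrow> real \<Rightarrow> real \<Rightarrow> bool" where
  "growth f Psi q r M \<longleftrightarrow> (\<forall>x \<in> edom Psi. \<forall>s. is_argmin_lin Psi (grad f x) s \<longrightarrow>
     (\<forall>\<theta>\<in>{0..1}. Dcal f Psi x s \<theta> \<le>
        ereal (M * \<theta> powr q / q * pw (real_of_ereal (dgap f Psi x (grad f x))) r)))"

text \<open>best duality gap gap_k = min_{i \<le> k} gap(x_k, g_i)\<close>
definition best_gap :: "('a::real_inner \<Rightarrow> ereal) \<Rightarrow> ('a \<Rightarrow> ereal) \<Rightarrow> (nat \<Rightarrow> 'a) \<Rightarrow> nat \<Rightarrow> real" where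
  "best_gap f Psi x k = Min ((\<lambda>i. real_of_ereal (dgap f Psi (x k) (grad f (x i)))) ` {..k})"

end

theory Submission
  imports Defs
begin

text \<open>The exact line search minimises the objective \<open>\<Phi> = f + \<Psi>\<close> on the segment from
  \<open>x\<^sub>k\<close> to \<open>s\<^sub>k\<close>, because \<open>\<Phi>(x\<^sub>k + t (s\<^sub>k - x\<^sub>k)) = \<Phi>(x\<^sub>k) - t G\<^sub>k + \<D>(x\<^sub>k, s\<^sub>k, t)\<close> where
  \<open>G\<^sub>k = gap(x\<^sub>k, g\<^sub>k)\<close>. The best gap keeps the old dual points \<open>g\<^sub>i\<close>, so it decreases at least as
  much as \<open>\<Phi>\<close>, and the growth property gives \<open>gap_(k+1) \<le> gap_k - t G\<^sub>k + M t^q / q G\<^sub>k^r\<close> for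
  every \<open>t \<in> [0,1]\<close>. As \<open>gap_k \<le> G\<^sub>k\<close>, the choice \<open>t = min 1 ((gap_k^(1-r) / M)^(1/(q-1)))\<close> yields
  the contraction. For \<open>r = 1\<close> its factor is constant. For \<open>r < 1\<close> it is \<open>1/q\<close> while
  \<open>gap_k^(1-r) > M\<close>; afterwards Bernoulli's inequality shows that \<open>gap_k^((r-1)/(q-1))\<close> grows by
  at least \<open>(1 - r) / (q M^(1/(q-1)))\<close> per step.\<close>

section \<open>The scalar gap recursion\<close>

lemma pw_mult_pw_le:
  fixes g G r :: real
  assumes "0 \<le> g" "g \<le> G" "0 \<le> r" "r \<le> 1"
  shows "pw g (1 - r) * pw G r \<le> G"
proof (cases "r = 0 \<or> r = 1")
  case True then show ?thesis using assms by (auto simp: pw_def)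
next
  case False
  have "g powr (1 - r) * G powr r \<le> G powr (1 - r) * G powr r"
    using assms by (intro mult_right_mono powr_mono2) auto
  also have "\<dots> = G" using assms by (simp add: powr_add[symmetric])
  finally show ?thesis using False by (simp add: pw_def)
qed

lemma descent_step_bound:
  fixes g G q r M a :: real
  assumes q: "q > 1" and r: "0 \<le> r" "r \<le> 1" and M: "M > 0"
    and g: "0 \<le> g" "g \<le> G"
    and a: "\<forall>t\<in>{0..1}. a \<le> g - t * G + M * t powr q / q * pw G r"
  shows "a \<le> g * (1 - (q - 1) / q * min 1 ((pw g (1 - r) / M) powr (1 / (q - 1))))"
proof -
  define X where "X = pw g (1 - r) / M"
  define t where "t = min 1 (X powr (1 / (q - 1)))"
  have X0: "0 \<le> X" using M g by (auto simp: X_def pw_def)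
  have t01: "t \<in> {0..1}" by (auto simp: t_def)
  have "t powr (q - 1) \<le> (X powr (1 / (q - 1))) powr (q - 1)"
    using t01 q by (intro powr_mono2) (auto simp: t_def)
  also have "\<dots> = X" using q X0 by (simp add: powr_powr)
  finally have "M * t powr (q - 1) * pw G r \<le> M * X * pw G r"
    using M g by (intro mult_right_mono mult_left_mono) (auto simp: pw_def)
  also have "\<dots> = pw g (1 - r) * pw G r" using M by (simp add: X_def)
  also have "\<dots> \<le> G" using pw_mult_pw_le[OF g r] .
  finally have "t / q * (M * t powr (q - 1) * pw G r) \<le> t / q * G"
    using t01 q by (intro mult_left_mono) auto
  moreover have "M * t powr q / q * pw G r = t / q * (M * t powr (q - 1) * pw G r)"
    using t01 powr_mult_base[of t "q - 1"] by simp
  moreover have "a \<le> g - t * G + M * t powr q / q * pw G r" using a t01 by blast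
  ultimately have "a \<le> g - t * G + t / q * G" by linarith
  also have "\<dots> = g - (q - 1) / q * t * G" using q by (simp add: field_simps)
  also have "\<dots> \<le> g - (q - 1) / q * t * g"
    using q t01 g by (intro diff_left_mono mult_left_mono) auto
  finally show ?thesis by (simp add: t_def X_def algebra_simps)
qed

lemma one_plus_mult_le_powr_neg:
  fixes t \<alpha> :: real
  assumes "0 \<le> t" "t < 1" "0 < \<alpha>"
  shows "1 + \<alpha> * t \<le> (1 - t) powr (- \<alpha>)"
proof -
  have "\<alpha> * ln (1 - t) \<le> \<alpha> * (- t)"
    using ln_le_minus_one[of "1 - t"] assms by (intro mult_left_mono) auto
  hence "1 + \<alpha> * t \<le> 1 + (- \<alpha> * ln (1 - t))" by simp
  also have "\<dots> \<le> exp (- \<alpha> * ln (1 - t))" by (rule exp_ge_add_one_self)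
  also have "\<dots> = (1 - t) powr (- \<alpha>)" using assms by (simp add: powr_def)
  finally show ?thesis .
qed

locale gap_recursion =
  fixes a :: "nat \<Rightarrow> real" and q r M :: real
  assumes q: "q > 1" and M: "M > 0"
    and a_nonneg: "\<And>k. 0 \<le> a k"
    and a_Suc_le: "\<And>k. a (Suc k) \<le>
        a k * (1 - (q - 1) / q * min 1 ((pw (a k) (1 - r) / M) powr (1 / (q - 1))))"
begin

lemma a_Suc_le_a: "a (Suc k) \<le> a k"
proof -
  have "0 \<le> (q - 1) / q * min 1 ((pw (a k) (1 - r) / M) powr (1 / (q - 1)))"
    using q by simp
  hence "a k * (1 - (q - 1) / q * min 1 ((pw (a k) (1 - r) / M) powr (1 / (q - 1)))) \<le> a k * 1"
    using a_nonneg[of k] by (intro mult_left_mono) auto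
  thus ?thesis using a_Suc_le[of k] by simp
qed

lemma a_antimono: "m \<le> n \<Longrightarrow> a n \<le> a m"
  by (induction n rule: dec_induct) (auto intro: order_trans[OF a_Suc_le_a])

lemma linear_rate:
  assumes "r = 1"
  shows "a k \<le> a 0 * (1 - (q - 1) / q * min 1 (M powr (- 1 / (q - 1)))) ^ k"
proof (induction k)
  case 0 then show ?case by simp
next
  case (Suc k)
  define c where "c = 1 - (q - 1) / q * min 1 (M powr (- 1 / (q - 1)))"
  have "(q - 1) / q * min 1 (M powr (- 1 / (q - 1))) \<le> (q - 1) / q * 1"
    using q by (intro mult_left_mono) auto
  also have "\<dots> \<le> 1" using q by simp
  finally have c0: "0 \<le> c" by (simp add: c_def)
  have "M powr (- 1 / (q - 1)) = (1 / M) powr (1 / (q - 1))"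
    using M by (simp add: powr_divide powr_minus_divide)
  hence "a (Suc k) \<le> a k * c"
    using a_Suc_le[of k] assms by (simp add: pw_def c_def)
  also have "\<dots> \<le> a 0 * c ^ k * c"
    using Suc c0 by (intro mult_right_mono) (auto simp: c_def)
  finally show ?case by (simp add: c_def algebra_simps)
qed

lemma a_Suc_le_large:
  assumes "r < 1" and "M < a k powr (1 - r)"
  shows "a (Suc k) \<le> a k * (1 - (q - 1) / q)"
proof -
  have "1 < pw (a k) (1 - r) / M" using assms M by (simp add: pw_def)
  hence "1 \<le> (pw (a k) (1 - r) / M) powr (1 / (q - 1))"
    using q by (intro ge_one_powr_ge_zero) auto
  thus ?thesis using a_Suc_le[of k] by simp
qed

lemma geometric_phase:
  assumes "r < 1" and "\<And>j. j < k \<Longrightarrow> M < a j powr (1 - r)"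
  shows "a k \<le> a 0 * (1 - (q - 1) / q) ^ k"
  using assms(2)
proof (induction k)
  case 0 then show ?case by simp
next
  case (Suc k)
  have "a (Suc k) \<le> a k * (1 - (q - 1) / q)"
    using a_Suc_le_large[OF assms(1) Suc.prems] by simp
  also have "\<dots> \<le> a 0 * (1 - (q - 1) / q) ^ k * (1 - (q - 1) / q)"
    using Suc q by (intro mult_right_mono) (auto simp: field_simps)
  finally show ?case by (simp add: algebra_simps)
qed

lemma eventually_small:
  assumes "r < 1"
  shows "\<exists>k. a k powr (1 - r) \<le> M"
proof (rule ccontr)
  assume "\<not> ?thesis"
  hence large: "M < a k powr (1 - r)" for k by (auto simp: not_le)
  have "(\<lambda>k. a 0 * (1 - (q - 1) / q) ^ k) \<longlonglongrightarrow> a 0 * 0"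
    using q by (intro tendsto_mult tendsto_const LIMSEQ_realpow_zero) (auto simp: field_simps)
  moreover have "0 < M powr (1 / (1 - r))" using M by simp
  ultimately obtain k where "a 0 * (1 - (q - 1) / q) ^ k < M powr (1 / (1 - r))"
    by (metis (no_types, lifting) mult_zero_right order_tendstoD(2) eventually_sequentially order_refl)
  hence "a k < M powr (1 / (1 - r))"
    using geometric_phase[OF assms large] by (meson le_less_trans)
  hence "a k powr (1 - r) < (M powr (1 / (1 - r))) powr (1 - r)"
    using assms a_nonneg by (intro powr_less_mono2) auto
  also have "\<dots> = M" using assms M by (simp add: powr_powr)
  finally show False using large[of k] by simp
qed

lemma sublinear_step:
  assumes r: "r < 1" and small: "a k powr (1 - r) \<le> M" and nz: "a (Suc k) \<noteq> 0"
  shows "a k powr ((r - 1) / (q - 1)) + (1 - r) / q * (1 / M powr (1 / (q - 1)))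
    \<le> a (Suc k) powr ((r - 1) / (q - 1))"
proof -
  define \<alpha> where "\<alpha> = (1 - r) / (q - 1)"
  have \<alpha>: "0 < \<alpha>" "(r - 1) / (q - 1) = - \<alpha>" using r q by (auto simp: \<alpha>_def field_simps)
  have as0: "0 < a (Suc k)" using nz a_nonneg[of "Suc k"] by simp
  hence ak0: "0 < a k" using a_Suc_le_a[of k] by linarith
  define X where "X = a k powr (1 - r) / M"
  have "X \<le> 1" "0 \<le> X" using small M by (auto simp: X_def)
  hence "min 1 (X powr (1 / (q - 1))) = X powr (1 / (q - 1))"
    using q by (simp add: powr_le1)
  moreover define t where "t = (q - 1) / q * X powr (1 / (q - 1))"
  ultimately have step: "a (Suc k) \<le> a k * (1 - t)"
    using a_Suc_le[of k] r by (simp add: pw_def t_def X_def)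
  have t0: "0 \<le> t" using q by (simp add: t_def)
  have t1: "t < 1"
  proof (rule ccontr)
    assume "\<not> t < 1"
    hence "a k * (1 - t) \<le> 0" using ak0 by (simp add: mult_nonneg_nonpos)
    thus False using step as0 by simp
  qed
  have "a k powr (- \<alpha>) * (1 + \<alpha> * t) \<le> a k powr (- \<alpha>) * (1 - t) powr (- \<alpha>)"
    using one_plus_mult_le_powr_neg[OF t0 t1 \<alpha>(1)] by (intro mult_left_mono) auto
  also have "\<dots> = (a k * (1 - t)) powr (- \<alpha>)"
    using ak0 t1 by (simp add: powr_mult)
  also have "\<dots> \<le> a (Suc k) powr (- \<alpha>)"
    using step as0 \<alpha> by (intro powr_mono2') auto
  finally have *: "a k powr (- \<alpha>) + a k powr (- \<alpha>) * \<alpha> * t \<le> a (Suc k) powr (- \<alpha>)"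
    by (simp add: algebra_simps)
  have "X powr (1 / (q - 1)) = a k powr \<alpha> * (1 / M) powr (1 / (q - 1))"
    using ak0 M q by (simp add: X_def powr_divide powr_powr \<alpha>_def)
  hence "a k powr (- \<alpha>) * \<alpha> * t
      = (a k powr (- \<alpha>) * a k powr \<alpha>) * (\<alpha> * (q - 1) / q * (1 / M) powr (1 / (q - 1)))"
    by (simp add: t_def)
  also have "\<dots> = (1 - r) / q * (1 / M powr (1 / (q - 1)))"
    using ak0 q M by (simp add: powr_add[symmetric] \<alpha>_def powr_divide)
  finally show ?thesis using * \<alpha>(2) by simp
qed

lemma sublinear_accumulation:
  assumes r: "r < 1" and small: "a k0 powr (1 - r) \<le> M" and "k0 \<le> k" and "a k \<noteq> 0"
  shows "a k0 powr ((r - 1) / (q - 1)) + (1 - r) / q * (1 / M powr (1 / (q - 1))) * real (k - k0)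
    \<le> a k powr ((r - 1) / (q - 1))"
  using assms(3,4)
proof (induction k rule: dec_induct)
  case base then show ?case by simp
next
  case (step n)
  have "a n \<noteq> 0" using step.prems a_Suc_le_a[of n] a_nonneg[of "Suc n"] by auto
  moreover have "a n powr (1 - r) \<le> M"
    using small a_antimono[OF step.hyps(1)] a_nonneg r by (meson order_trans powr_mono2 diff_ge_0_iff_ge less_imp_le)
  moreover have diff: "real (Suc n - k0) = real (n - k0) + 1" using step.hyps(1) by simp
  ultimately show ?case
    using step.IH sublinear_step[OF r _ step.prems] unfolding diff distrib_left by simp
qed

lemma sublinear_phase:
  assumes r: "r < 1" and small: "a k0 powr (1 - r) \<le> M" and k: "k0 \<le> k"
  shows "a k \<le> (if a k0 = 0 then 0 else
    (a k0 powr ((r - 1) / (q - 1)) + (1 - r) / q * (1 / M powr (1 / (q - 1))) * real (k - k0))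
      powr ((q - 1) / (r - 1)))"
proof (cases "a k0 = 0")
  case True
  then show ?thesis using a_antimono[OF k] a_nonneg[of k] by simp
next
  case False
  define S where "S = a k0 powr ((r - 1) / (q - 1))
    + (1 - r) / q * (1 / M powr (1 / (q - 1))) * real (k - k0)"
  have "0 < S" unfolding S_def using False a_nonneg[of k0] r q M
    by (intro add_pos_nonneg) (auto simp: less_eq_real_def)
  have "a k \<le> S powr ((q - 1) / (r - 1))"
  proof (cases "a k = 0")
    case True then show ?thesis by simp
  next
    case nz: False
    have "(a k powr ((r - 1) / (q - 1))) powr ((q - 1) / (r - 1)) \<le> S powr ((q - 1) / (r - 1))"
      using sublinear_accumulation[OF r small k nz] \<open>0 < S\<close> r q
      by (intro powr_mono2') (auto simp: S_def divide_nonneg_neg)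
    moreover have "(a k powr ((r - 1) / (q - 1))) powr ((q - 1) / (r - 1)) = a k"
      using r q a_nonneg[of k] by (simp add: powr_powr)
    ultimately show ?thesis by simp
  qed
  with False show ?thesis by (simp add: S_def)
qed

lemma sublinear_rate:
  assumes r: "r < 1"
  shows "\<exists>k0. a k0 powr (1 - r) \<le> M
    \<and> (\<forall>k < k0. M < a k powr (1 - r))
    \<and> (\<forall>k \<le> k0. a k \<le> a 0 * (1 - (q - 1) / q) ^ k)
    \<and> (\<forall>k \<ge> k0. a k \<le> (if a k0 = 0 then 0 else
        (a k0 powr ((r - 1) / (q - 1)) + (1 - r) / q * (1 / M powr (1 / (q - 1))) * real (k - k0))
          powr ((q - 1) / (r - 1))))"
proof -
  define k0 where "k0 = (LEAST k. a k powr (1 - r) \<le> M)"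
  have small: "a k0 powr (1 - r) \<le> M"
    unfolding k0_def using eventually_small[OF r] by (rule LeastI_ex)
  have large: "M < a k powr (1 - r)" if "k < k0" for k
    using not_less_Least[OF that[unfolded k0_def]] by simp
  show ?thesis
    using small large geometric_phase[OF r] sublinear_phase[OF r small]
    by (intro exI[of _ k0]) (auto intro: less_le_trans)
qed

end

section \<open>Convex extended-real functions\<close>

lemma proper_fn_finite:
  assumes "proper_fn f" "f x \<noteq> \<infinity>"
  shows "f x = ereal (real_of_ereal (f x))"
  using assms by (cases "f x") (auto simp: proper_fn_def)

lemma has_grad_finite: "has_grad f x g \<Longrightarrow> f x \<noteq> \<infinity>"
  unfolding has_grad_def using eventually_nhds_x_imp_x by blast

lemma convex_fn_segment:
  fixes f :: "'a::real_vector \<Rightarrow> ereal"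
  assumes cf: "convex_fn f" and pf: "proper_fn f" and fx: "f x \<noteq> \<infinity>" and fy: "f y \<noteq> \<infinity>"
    and t: "0 \<le> t" "t \<le> 1"
  shows "f (x + t *\<^sub>R (y - x)) \<noteq> \<infinity>"
    and "real_of_ereal (f (x + t *\<^sub>R (y - x)))
      \<le> (1 - t) * real_of_ereal (f x) + t * real_of_ereal (f y)"
proof -
  have "x + t *\<^sub>R (y - x) = (1 - t) *\<^sub>R x + t *\<^sub>R y" by (simp add: algebra_simps)
  hence "f (x + t *\<^sub>R (y - x)) \<le> ereal (1 - t) * f x + ereal t * f y"
    using cf t unfolding convex_fn_def by metis
  also have "\<dots> = ereal ((1 - t) * real_of_ereal (f x) + t * real_of_ereal (f y))"
    by (subst proper_fn_finite[OF pf fx], subst proper_fn_finite[OF pf fy]) simp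
  finally have le: "f (x + t *\<^sub>R (y - x)) \<le> ereal ((1 - t) * real_of_ereal (f x) + t * real_of_ereal (f y))" .
  then show fin: "f (x + t *\<^sub>R (y - x)) \<noteq> \<infinity>" by auto
  show "real_of_ereal (f (x + t *\<^sub>R (y - x))) \<le> (1 - t) * real_of_ereal (f x) + t * real_of_ereal (f y)"
    using le by (subst (asm) proper_fn_finite[OF pf fin]) simp
qed

lemma convex_fn_gradient_ineq:
  fixes f :: "'a::real_inner \<Rightarrow> ereal"
  assumes cf: "convex_fn f" and pf: "proper_fn f" and hg: "has_grad f x g" and fy: "f y \<noteq> \<infinity>"
  shows "real_of_ereal (f x) + g \<bullet> (y - x) \<le> real_of_ereal (f y)"
proof -
  define F where "F z = real_of_ereal (f z)" for z
  define h where "h t = F (x + t *\<^sub>R (y - x))" for t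
  have "((\<lambda>t. x + t *\<^sub>R (y - x)) has_derivative (\<lambda>t. t *\<^sub>R (y - x))) (at 0 within {0<..})"
    by (auto intro!: derivative_eq_intros)
  moreover have "(F has_derivative (\<lambda>v. g \<bullet> v)) (at ((\<lambda>t. x + t *\<^sub>R (y - x)) 0))"
    using hg by (simp add: has_grad_def F_def[abs_def])
  ultimately have "(h has_derivative (\<lambda>t. g \<bullet> (t *\<^sub>R (y - x)))) (at 0 within {0<..})"
    unfolding h_def by (rule has_derivative_compose)
  moreover have "(\<lambda>t. g \<bullet> (t *\<^sub>R (y - x))) = (*) (g \<bullet> (y - x))" by (auto simp: algebra_simps)
  ultimately have "(h has_field_derivative (g \<bullet> (y - x))) (at 0 within {0<..})"
    by (simp add: has_field_derivative_def)
  hence lim: "((\<lambda>t. (h t - h 0) / (t - 0)) \<longlongrightarrow> g \<bullet> (y - x)) (at_right 0)"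
    by (simp add: has_field_derivative_iff)
  have "\<forall>\<^sub>F t in at_right 0. (h t - h 0) / (t - 0) \<le> F y - F x"
  proof -
    have "\<forall>\<^sub>F t in at_right (0::real). t < 1"
      unfolding eventually_at_right_field by (intro exI[of _ 1]) auto
    moreover have "\<forall>\<^sub>F t in at_right (0::real). 0 < t" by (simp add: eventually_at_right_less)
    ultimately show ?thesis
    proof eventually_elim
      case (elim t)
      have "h t - h 0 \<le> (F y - F x) * t"
        using convex_fn_segment(2)[OF cf pf has_grad_finite[OF hg] fy, of t] elim
        by (simp add: h_def F_def algebra_simps)
      thus ?case using elim by (simp add: divide_le_eq)
    qed
  qed
  hence "g \<bullet> (y - x) \<le> F y - F x"
    using tendsto_le[OF _ tendsto_const lim] by simp
  thus ?thesis by (simp add: F_def)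
qed

lemma conj_fn_at_gradient:
  fixes f :: "'a::real_inner \<Rightarrow> ereal"
  assumes cf: "convex_fn f" and pf: "proper_fn f" and hg: "has_grad f x g"
  shows "conj_fn f g = ereal (g \<bullet> x - real_of_ereal (f x))"
  unfolding conj_fn_def
proof (rule antisym)
  show "(SUP y. ereal (g \<bullet> y) - f y) \<le> ereal (g \<bullet> x - real_of_ereal (f x))"
  proof (rule SUP_least)
    fix y
    show "ereal (g \<bullet> y) - f y \<le> ereal (g \<bullet> x - real_of_ereal (f x))"
    proof (cases "f y = \<infinity>")
      case False
      then show ?thesis
        using convex_fn_gradient_ineq[OF cf pf hg False]
        by (subst proper_fn_finite[OF pf False]) (simp add: inner_diff_right)
    qed simp
  qed
  obtain c where "f x = ereal c" using proper_fn_finite[OF pf has_grad_finite[OF hg]] by blast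
  then show "ereal (g \<bullet> x - real_of_ereal (f x)) \<le> (SUP y. ereal (g \<bullet> y) - f y)"
    by (intro SUP_upper2[of x]) auto
qed

lemma argmin_lin_finite:
  assumes pPsi: "proper_fn Psi" and s: "is_argmin_lin Psi g s"
  shows "Psi s \<noteq> \<infinity>"
proof
  assume "Psi s = \<infinity>"
  moreover obtain y where "Psi y \<noteq> \<infinity>" "Psi y \<noteq> -\<infinity>" using pPsi by (auto simp: proper_fn_def)
  moreover have "ereal (g \<bullet> s) + Psi s \<le> ereal (g \<bullet> y) + Psi y"
    using s by (simp add: is_argmin_lin_def)
  ultimately show False by (cases "Psi y") auto
qed

lemma conj_fn_at_argmin_lin:
  fixes Psi :: "'a::real_inner \<Rightarrow> ereal"
  assumes pPsi: "proper_fn Psi" and s: "is_argmin_lin Psi g s"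
  shows "conj_fn Psi (- g) = ereal (- (g \<bullet> s) - real_of_ereal (Psi s))"
  unfolding conj_fn_def
proof (rule antisym)
  obtain c where Psi_s: "Psi s = ereal c"
    using proper_fn_finite[OF pPsi argmin_lin_finite[OF pPsi s]] by blast
  show "(SUP y. ereal (- g \<bullet> y) - Psi y) \<le> ereal (- (g \<bullet> s) - real_of_ereal (Psi s))"
  proof (rule SUP_least)
    fix y
    have "ereal (g \<bullet> s) + Psi s \<le> ereal (g \<bullet> y) + Psi y"
      using s by (simp add: is_argmin_lin_def)
    then show "ereal (- g \<bullet> y) - Psi y \<le> ereal (- (g \<bullet> s) - real_of_ereal (Psi s))"
      using pPsi Psi_s unfolding proper_fn_def by (cases "Psi y") auto
  qed
  show "ereal (- (g \<bullet> s) - real_of_ereal (Psi s)) \<le> (SUP y. ereal (- g \<bullet> y) - Psi y)"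
    using Psi_s by (intro SUP_upper2[of s]) auto
qed

section \<open>The conditional gradient iteration\<close>

locale cond_grad_run =
  fixes f Psi :: "'a::real_inner \<Rightarrow> ereal" and x s :: "nat \<Rightarrow> 'a" and \<theta> :: "nat \<Rightarrow> real"
  assumes convex_f: "convex_fn f" and proper_f: "proper_fn f"
    and convex_Psi: "convex_fn Psi" and proper_Psi: "proper_fn Psi"
    and grad_exists: "\<And>y. Psi y \<noteq> \<infinity> \<Longrightarrow> \<exists>g. has_grad f y g"
    and x0: "Psi (x 0) \<noteq> \<infinity>"
    and s_argmin: "\<And>k. is_argmin_lin Psi (grad f (x k)) (s k)"
    and theta_range: "\<And>k. 0 \<le> \<theta> k \<and> \<theta> k \<le> 1"
    and x_step: "\<And>k. x (Suc k) = (1 - \<theta> k) *\<^sub>R x k + \<theta> k *\<^sub>R s k"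
begin

abbreviation g :: "nat \<Rightarrow> 'a" where "g k \<equiv> grad f (x k)"

definition f_real :: "'a \<Rightarrow> real" where "f_real z = real_of_ereal (f z)"
definition Psi_real :: "'a \<Rightarrow> real" where "Psi_real z = real_of_ereal (Psi z)"
definition Phi :: "'a \<Rightarrow> real" where "Phi z = f_real z + Psi_real z"

text \<open>\<open>dual i\<close> is the value of \<open>f\<^sup>*(g\<^sub>i) + \<Psi>\<^sup>*(-g\<^sub>i)\<close>, see \<open>dgap_eq\<close>.\<close>
definition dual :: "nat \<Rightarrow> real" where
  "dual i = g i \<bullet> (x i - s i) - f_real (x i) - Psi_real (s i)"

lemma Psi_s_finite: "Psi (s k) \<noteq> \<infinity>"
  using argmin_lin_finite[OF proper_Psi s_argmin] .

lemma Psi_segment_finite: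
  "Psi (x k) \<noteq> \<infinity> \<Longrightarrow> 0 \<le> t \<Longrightarrow> t \<le> 1 \<Longrightarrow> Psi (x k + t *\<^sub>R (s k - x k)) \<noteq> \<infinity>"
  using convex_fn_segment(1)[OF convex_Psi proper_Psi _ Psi_s_finite] by blast

lemma x_Suc_eq: "x (Suc k) = x k + \<theta> k *\<^sub>R (s k - x k)"
  using x_step by (simp add: algebra_simps)

lemma Psi_x_finite: "Psi (x k) \<noteq> \<infinity>"
  by (induction k) (use x0 theta_range Psi_segment_finite x_Suc_eq in auto)

lemma has_grad_iterate: "has_grad f (x k) (g k)"
proof -
  obtain g' where "has_grad f (x k) g'" using grad_exists[OF Psi_x_finite] by blast
  thus ?thesis unfolding grad_def by (rule someI)
qed

lemma f_finite: "Psi z \<noteq> \<infinity> \<Longrightarrow> f z \<noteq> \<infinity>"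
  using grad_exists has_grad_finite by blast

lemma f_eq: "Psi z \<noteq> \<infinity> \<Longrightarrow> f z = ereal (f_real z)"
  using proper_fn_finite[OF proper_f f_finite] by (simp add: f_real_def)

lemma Psi_eq: "Psi z \<noteq> \<infinity> \<Longrightarrow> Psi z = ereal (Psi_real z)"
  using proper_fn_finite[OF proper_Psi] by (simp add: Psi_real_def)

lemma s_argmin_real:
  assumes "Psi y \<noteq> \<infinity>"
  shows "g i \<bullet> s i + Psi_real (s i) \<le> g i \<bullet> y + Psi_real y"
proof -
  have "ereal (g i \<bullet> s i) + Psi (s i) \<le> ereal (g i \<bullet> y) + Psi y"
    using s_argmin[of i] by (simp add: is_argmin_lin_def)
  thus ?thesis unfolding Psi_eq[OF assms] Psi_eq[OF Psi_s_finite] by simp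
qed

lemma dgap_eq: "dgap f Psi (x m) (g i) = ereal (Phi (x m) + dual i)"
proof -
  have "conj_fn f (g i) = ereal (g i \<bullet> x i - f_real (x i))"
    using conj_fn_at_gradient[OF convex_f proper_f has_grad_iterate] by (simp add: f_real_def)
  moreover have "conj_fn Psi (- g i) = ereal (- (g i \<bullet> s i) - Psi_real (s i))"
    using conj_fn_at_argmin_lin[OF proper_Psi s_argmin] by (simp add: Psi_real_def)
  ultimately show ?thesis
    by (simp add: dgap_def f_eq[OF Psi_x_finite] Psi_eq[OF Psi_x_finite] Phi_def dual_def
        inner_diff_right)
qed

lemma weak_duality: "0 \<le> Phi (x m) + dual i"
proof -
  have "f_real (x i) + g i \<bullet> (x m - x i) \<le> f_real (x m)"
    using convex_fn_gradient_ineq[OF convex_f proper_f has_grad_iterate f_finite[OF Psi_x_finite]]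
    unfolding f_real_def .
  with s_argmin_real[OF Psi_x_finite, of i m] show ?thesis
    by (simp add: Phi_def dual_def inner_diff_right)
qed

lemma best_gap_eq: "best_gap f Psi x k = Min ((\<lambda>i. Phi (x k) + dual i) ` {..k})"
  unfolding best_gap_def dgap_eq by simp

lemma best_gap_nonneg: "0 \<le> best_gap f Psi x k"
  unfolding best_gap_eq using weak_duality by simp

lemma best_gap_le_gap: "best_gap f Psi x k \<le> Phi (x k) + dual k"
  unfolding best_gap_eq by (intro Min_le) auto

lemma best_gap_Suc_le:
  "best_gap f Psi x (Suc k) \<le> best_gap f Psi x k + (Phi (x (Suc k)) - Phi (x k))"
proof -
  have "best_gap f Psi x k \<in> (\<lambda>i. Phi (x k) + dual i) ` {..k}"
    unfolding best_gap_eq by (rule Min_in) auto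
  then obtain i where i: "i \<le> k" "best_gap f Psi x k = Phi (x k) + dual i" by auto
  have "best_gap f Psi x (Suc k) \<le> Phi (x (Suc k)) + dual i"
    unfolding best_gap_eq using i by (intro Min_le) auto
  thus ?thesis using i by simp
qed

lemma Dcal_eq:
  assumes "0 \<le> t" "t \<le> 1"
  shows "Dcal f Psi (x k) (s k) t
    = ereal (Phi (x k + t *\<^sub>R (s k - x k)) - Phi (x k) + t * (Phi (x k) + dual k))"
proof -
  note xt_finite = Psi_segment_finite[OF Psi_x_finite assms, of k]
  show ?thesis
    unfolding Dcal_def bregman_def f_eq[OF xt_finite] Psi_eq[OF xt_finite]
      f_eq[OF Psi_x_finite] Psi_eq[OF Psi_x_finite] Psi_eq[OF Psi_s_finite]
    by (simp add: Phi_def dual_def inner_diff_right algebra_simps)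
qed

lemma objective_decrease:
  assumes line_search: "\<forall>t \<in> {0..1}.
      ereal (1 - \<theta> k) * dgap f Psi (x k) (g k) + Dcal f Psi (x k) (s k) (\<theta> k)
      \<le> ereal (1 - t) * dgap f Psi (x k) (g k) + Dcal f Psi (x k) (s k) t"
    and grow: "growth f Psi q r M" and t: "0 \<le> t" "t \<le> 1"
  shows "Phi (x (Suc k)) - Phi (x k)
    \<le> - t * (Phi (x k) + dual k) + M * t powr q / q * pw (Phi (x k) + dual k) r"
proof -
  note theta = theta_range[of k, THEN conjunct1] theta_range[of k, THEN conjunct2]
  have "Phi (x k + \<theta> k *\<^sub>R (s k - x k)) \<le> Phi (x k + t *\<^sub>R (s k - x k))"
    using line_search[rule_format, of t] t unfolding dgap_eq Dcal_eq[OF t] Dcal_eq[OF theta] by (simp add: algebra_simps)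
  moreover have "Dcal f Psi (x k) (s k) t
      \<le> ereal (M * t powr q / q * pw (real_of_ereal (dgap f Psi (x k) (g k))) r)"
    using grow[unfolded growth_def, rule_format, of "x k" "s k" t] Psi_x_finite s_argmin t
    by (simp add: edom_def)
  ultimately show ?thesis
    unfolding x_Suc_eq using t by (simp add: Dcal_eq dgap_eq algebra_simps)
qed

end

theorem theorem1:
  fixes f Psi :: "'a::euclidean_space \<Rightarrow> ereal"
    and x s :: "nat \<Rightarrow> 'a" and \<theta> :: "nat \<Rightarrow> real"
    and q r M :: real
  assumes cpc_f: "cpc_fn f" and cpc_Psi: "cpc_fn Psi"
    and A1: "\<forall>y \<in> edom Psi. \<exists>g. has_grad f y g"
    and A2: "\<forall>y \<in> edom f. \<forall>g. has_grad f y g \<longrightarrow> (\<exists>z. is_argmin_lin Psi g z)"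
    and x0: "x 0 \<in> edom Psi"
    and s_def: "\<forall>k. is_argmin_lin Psi (grad f (x k)) (s k)"
    and theta_range: "\<forall>k. 0 \<le> \<theta> k \<and> \<theta> k \<le> 1"
    and x_step: "\<forall>k. x (Suc k) = (1 - \<theta> k) *\<^sub>R x k + \<theta> k *\<^sub>R s k"
    and line_search: "\<forall>k. \<forall>t \<in> {0..1}.
        ereal (1 - \<theta> k) * dgap f Psi (x k) (grad f (x k)) + Dcal f Psi (x k) (s k) (\<theta> k)
        \<le> ereal (1 - t) * dgap f Psi (x k) (grad f (x k)) + Dcal f Psi (x k) (s k) t"
    and q: "q > 1" and r: "0 \<le> r" "r \<le> 1"
    and M: "M > 0"
    and grow: "growth f Psi q r M"
  shows
    "(\<forall>k. best_gap f Psi x (Suc k) \<le> best_gap f Psi x k *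
        (1 - (q - 1) / q * min 1 ((pw (best_gap f Psi x k) (1 - r) / M) powr (1 / (q - 1)))))
   \<and> (r = 1 \<longrightarrow> (\<forall>k. best_gap f Psi x k \<le>
        best_gap f Psi x 0 * (1 - (q - 1) / q * min 1 (M powr (- 1 / (q - 1)))) ^ k))
   \<and> (r < 1 \<longrightarrow> (\<exists>k0. best_gap f Psi x k0 powr (1 - r) \<le> M
        \<and> (\<forall>k < k0. M < best_gap f Psi x k powr (1 - r))
        \<and> (\<forall>k \<le> k0. best_gap f Psi x k \<le> best_gap f Psi x 0 * (1 - (q - 1) / q) ^ k)
        \<and> (\<forall>k \<ge> k0. best_gap f Psi x k \<le>
             (if best_gap f Psi x k0 = 0 then 0 else
              (best_gap f Psi x k0 powr ((r - 1) / (q - 1))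
                 + (1 - r) / q * (1 / M powr (1 / (q - 1))) * real (k - k0))
                powr ((q - 1) / (r - 1))))))"
proof -
  interpret cond_grad_run f Psi x s \<theta>
    using cpc_f cpc_Psi A1 x0 s_def theta_range x_step
    by unfold_locales (auto simp: cpc_fn_def edom_def)
  have step: "\<forall>t\<in>{0..1}. best_gap f Psi x (Suc k) \<le> best_gap f Psi x k
      - t * (Phi (x k) + dual k) + M * t powr q / q * pw (Phi (x k) + dual k) r" for k
  proof
    fix t :: real assume "t \<in> {0..1}"
    then show "best_gap f Psi x (Suc k) \<le> best_gap f Psi x k
      - t * (Phi (x k) + dual k) + M * t powr q / q * pw (Phi (x k) + dual k) r"
      using best_gap_Suc_le[of k] objective_decrease[OF spec[OF line_search] grow, of t k] by auto
  qed
  interpret gap_recursion "best_gap f Psi x" q r M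
    using q M descent_step_bound[OF q r M best_gap_nonneg best_gap_le_gap step]
    by unfold_locales (auto simp: best_gap_nonneg)
  show ?thesis
    using a_Suc_le linear_rate sublinear_rate by blast
qed

end
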